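(* Let $F:\mathcal{D}\to\mathcal{C}$, $G:\mathcal{C}\to\mathcal{D}$ and $H:\mathcal{D}\to\mathcal{E}$ be functors, and assume that $G$ is a right adjoint or a left adjoint of $F$. If $H\circ G$ is naturally full and $F$ is separable, then $H$ is naturally full.
   Context: For a functor $F:\mathcal{A}\to\mathcal{B}$, let $\mathcal{F}:\mathrm{Hom}_{\mathcal{A}}(\bullet,\bullet)\to\mathrm{Hom}_{\mathcal{B}}(F(\bullet),F(\bullet))$ be the natural transformation (of functors $\mathcal{A}^{op}\times\mathcal{A}\to\mathbf{Sets}$) given by $\mathcal{F}_{A,A'}(f)=F(f)$. $F$ is called separable if there is a natural transformation $\mathcal{T}:\mathrm{Hom}_{\mathcal{B}}(F(\bullet),F(\bullet))\to\mathrm{Hom}_{\mathcal{A}}(\bullet,\bullet)$ with $\mathcal{T}\circ\mathcal{F}=\mathrm{id}$. $F$ is called naturally full if there is a natural transformation $\mathcal{P}:\mathrm{Hom}_{\mathcal{B}}(F(\bullet),F(\bullet))\to\mathrm{Hom}_{\mathcal{A}}(\bullet,\bullet)$ with $\mathcal{F}\circ\mathcal{P}=\mathrm{id}$, i.e. $F(\mathcal{P}_{A,A'}(u))=u$ for all $u:F(A)\to F(A')$, naturality meaning $\mathcal{P}_{X,T}(F(h)\circ g\circ F(f))=h\circ\mathcal{P}_{Y,Z}(g)\circ f$. *)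

theory Defs
  imports Main
begin

record ('o, 'a) cat =
  cobj :: "'o set"
  carr :: "'a set"
  cdom :: "'a \<Rightarrow> 'o"
  ccod :: "'a \<Rightarrow> 'o"
  ccomp :: "'a \<Rightarrow> 'a \<Rightarrow> 'a"   (* ccomp C g f = g \<circ> f *)
  cid :: "'o \<Rightarrow> 'a"

definition hom :: "('o, 'a, 'm) cat_scheme \<Rightarrow> 'o \<Rightarrow> 'o \<Rightarrow> 'a set" where
  "hom C A B = {f \<in> carr C. cdom C f = A \<and> ccod C f = B}"

definition category :: "('o, 'a, 'm) cat_scheme \<Rightarrow> bool" where
  "category C \<longleftrightarrow>
     (\<forall>f \<in> carr C. cdom C f \<in> cobj C \<and> ccod C f \<in> cobj C)
   \<and> (\<forall>A \<in> cobj C. cid C A \<in> hom C A A)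
   \<and> (\<forall>f \<in> carr C. \<forall>g \<in> carr C. ccod C f = cdom C g \<longrightarrow>
        ccomp C g f \<in> hom C (cdom C f) (ccod C g))
   \<and> (\<forall>f \<in> carr C. \<forall>g \<in> carr C. \<forall>h \<in> carr C.
        ccod C f = cdom C g \<and> ccod C g = cdom C h \<longrightarrow>
        ccomp C h (ccomp C g f) = ccomp C (ccomp C h g) f)
   \<and> (\<forall>f \<in> carr C. ccomp C (cid C (ccod C f)) f = f \<and> ccomp C f (cid C (cdom C f)) = f)"

definition is_functor ::
  "('o1, 'a1, 'm1) cat_scheme \<Rightarrow> ('o2, 'a2, 'm2) cat_scheme \<Rightarrow> ('o1 \<Rightarrow> 'o2) \<Rightarrow> ('a1 \<Rightarrow> 'a2) \<Rightarrow> bool" where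
  "is_functor C D Fo Fa \<longleftrightarrow> category C \<and> category D
   \<and> (\<forall>A \<in> cobj C. Fo A \<in> cobj D)
   \<and> (\<forall>f \<in> carr C. Fa f \<in> hom D (Fo (cdom C f)) (Fo (ccod C f)))
   \<and> (\<forall>f \<in> carr C. \<forall>g \<in> carr C. ccod C f = cdom C g \<longrightarrow>
        Fa (ccomp C g f) = ccomp D (Fa g) (Fa f))
   \<and> (\<forall>A \<in> cobj C. Fa (cid C A) = cid D (Fo A))"

definition naturally_full ::
  "('o1, 'a1, 'm1) cat_scheme \<Rightarrow> ('o2, 'a2, 'm2) cat_scheme \<Rightarrow> ('o1 \<Rightarrow> 'o2) \<Rightarrow> ('a1 \<Rightarrow> 'a2) \<Rightarrow> bool" where
  "naturally_full C D Fo Fa \<longleftrightarrow>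
   (\<exists>P :: 'o1 \<Rightarrow> 'o1 \<Rightarrow> 'a2 \<Rightarrow> 'a1.
      (\<forall>A \<in> cobj C. \<forall>A' \<in> cobj C. \<forall>u \<in> hom D (Fo A) (Fo A').
          P A A' u \<in> hom C A A' \<and> Fa (P A A' u) = u)
    \<and> (\<forall>X \<in> cobj C. \<forall>Y \<in> cobj C. \<forall>Z \<in> cobj C. \<forall>T \<in> cobj C.
       \<forall>f \<in> hom C X Y. \<forall>g \<in> hom D (Fo Y) (Fo Z). \<forall>h \<in> hom C Z T.
          P X T (ccomp D (Fa h) (ccomp D g (Fa f))) = ccomp C h (ccomp C (P Y Z g) f)))"

definition separable ::
  "('o1, 'a1, 'm1) cat_scheme \<Rightarrow> ('o2, 'a2, 'm2) cat_scheme \<Rightarrow> ('o1 \<Rightarrow> 'o2) \<Rightarrow> ('a1 \<Rightarrow> 'a2) \<Rightarrow> bool" where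
  "separable C D Fo Fa \<longleftrightarrow>
   (\<exists>T :: 'o1 \<Rightarrow> 'o1 \<Rightarrow> 'a2 \<Rightarrow> 'a1.
      (\<forall>A \<in> cobj C. \<forall>A' \<in> cobj C. \<forall>u \<in> hom D (Fo A) (Fo A'). T A A' u \<in> hom C A A')
    \<and> (\<forall>A \<in> cobj C. \<forall>A' \<in> cobj C. \<forall>f \<in> hom C A A'. T A A' (Fa f) = f)
    \<and> (\<forall>X \<in> cobj C. \<forall>Y \<in> cobj C. \<forall>Z \<in> cobj C. \<forall>T' \<in> cobj C.
       \<forall>f \<in> hom C X Y. \<forall>g \<in> hom D (Fo Y) (Fo Z). \<forall>h \<in> hom C Z T'.
          T X T' (ccomp D (Fa h) (ccomp D g (Fa f))) = ccomp C h (ccomp C (T Y Z g) f)))"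

definition adjunction ::
  "('o1, 'a1, 'm1) cat_scheme \<Rightarrow> ('o2, 'a2, 'm2) cat_scheme \<Rightarrow>
   ('o1 \<Rightarrow> 'o2) \<Rightarrow> ('a1 \<Rightarrow> 'a2) \<Rightarrow> ('o2 \<Rightarrow> 'o1) \<Rightarrow> ('a2 \<Rightarrow> 'a1) \<Rightarrow> bool" where
  "adjunction X Y Lo La Ro Ra \<longleftrightarrow> is_functor X Y Lo La \<and> is_functor Y X Ro Ra \<and>
   (\<exists>(\<eta> :: 'o1 \<Rightarrow> 'a1) (\<epsilon> :: 'o2 \<Rightarrow> 'a2).
      (\<forall>A \<in> cobj X. \<eta> A \<in> hom X A (Ro (Lo A)))
    \<and> (\<forall>A \<in> cobj X. \<forall>B \<in> cobj X. \<forall>f \<in> hom X A B.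
         ccomp X (Ra (La f)) (\<eta> A) = ccomp X (\<eta> B) f)
    \<and> (\<forall>U \<in> cobj Y. \<epsilon> U \<in> hom Y (Lo (Ro U)) U)
    \<and> (\<forall>U \<in> cobj Y. \<forall>V \<in> cobj Y. \<forall>g \<in> hom Y U V.
         ccomp Y (\<epsilon> V) (La (Ra g)) = ccomp Y g (\<epsilon> U))
    \<and> (\<forall>A \<in> cobj X. ccomp Y (\<epsilon> (Lo A)) (La (\<eta> A)) = cid Y (Lo A))
    \<and> (\<forall>U \<in> cobj Y. ccomp X (Ra (\<epsilon> U)) (\<eta> (Ro U)) = cid X (Ro U)))"

end

theory Submission
  imports Defs
begin

text \<open>By Rafael's theorem, a separable left adjoint \<open>F \<turnstile> G\<close> has a unit \<open>Id \<rightarrow> GF\<close> with a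
  natural retraction, and a separable right adjoint \<open>G \<turnstile> F\<close> has a counit \<open>GF \<rightarrow> Id\<close> with a
  natural section. Either way the identity of \<open>D\<close> is a natural retract \<open>r \<circ> i = id\<close> of \<open>GF\<close>, and
  if \<open>P\<close> is a natural section of the hom-map of \<open>HG\<close>, then
  \<open>u \<mapsto> r \<circ> G (P (H i \<circ> u \<circ> H r)) \<circ> i\<close> is one for \<open>H\<close>.\<close>

lemma category_simps:
  assumes "category C"
  shows "A \<in> cobj C \<Longrightarrow> cid C A \<in> carr C"
    and "A \<in> cobj C \<Longrightarrow> cdom C (cid C A) = A"
    and "A \<in> cobj C \<Longrightarrow> ccod C (cid C A) = A"
    and "f \<in> carr C \<Longrightarrow> cdom C f \<in> cobj C"
    and "f \<in> carr C \<Longrightarrow> ccod C f \<in> cobj C"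
    and "f \<in> carr C \<Longrightarrow> g \<in> carr C \<Longrightarrow> ccod C f = cdom C g \<Longrightarrow> ccomp C g f \<in> carr C"
    and "f \<in> carr C \<Longrightarrow> g \<in> carr C \<Longrightarrow> ccod C f = cdom C g \<Longrightarrow> cdom C (ccomp C g f) = cdom C f"
    and "f \<in> carr C \<Longrightarrow> g \<in> carr C \<Longrightarrow> ccod C f = cdom C g \<Longrightarrow> ccod C (ccomp C g f) = ccod C g"
    and "f \<in> carr C \<Longrightarrow> g \<in> carr C \<Longrightarrow> h \<in> carr C \<Longrightarrow> ccod C f = cdom C g \<Longrightarrow> ccod C g = cdom C h \<Longrightarrow>
         ccomp C (ccomp C h g) f = ccomp C h (ccomp C g f)"
    and "f \<in> carr C \<Longrightarrow> B = ccod C f \<Longrightarrow> ccomp C (cid C B) f = f"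
    and "f \<in> carr C \<Longrightarrow> B = cdom C f \<Longrightarrow> ccomp C f (cid C B) = f"
  using assms unfolding category_def hom_def by auto

lemma hom_objects:
  assumes "category C" and "f \<in> hom C A B"
  shows "A \<in> cobj C" and "B \<in> cobj C"
  using assms unfolding category_def hom_def by auto

lemma functor_simps:
  assumes "is_functor C D Fo Fa"
  shows "A \<in> cobj C \<Longrightarrow> Fo A \<in> cobj D"
    and "f \<in> carr C \<Longrightarrow> Fa f \<in> carr D"
    and "f \<in> carr C \<Longrightarrow> cdom D (Fa f) = Fo (cdom C f)"
    and "f \<in> carr C \<Longrightarrow> ccod D (Fa f) = Fo (ccod C f)"
    and "f \<in> carr C \<Longrightarrow> g \<in> carr C \<Longrightarrow> ccod C f = cdom C g \<Longrightarrow> Fa (ccomp C g f) = ccomp D (Fa g) (Fa f)"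
    and "A \<in> cobj C \<Longrightarrow> Fa (cid C A) = cid D (Fo A)"
  using assms unfolding is_functor_def hom_def by auto

lemma functor_categories:
  assumes "is_functor C D Fo Fa"
  shows "category C" and "category D"
  using assms unfolding is_functor_def by auto

locale natural_hom_retraction =
  fixes C :: "('o1, 'a1, 'm1) cat_scheme" and D :: "('o2, 'a2, 'm2) cat_scheme"
    and Fo :: "'o1 \<Rightarrow> 'o2" and Fa :: "'a1 \<Rightarrow> 'a2" and T :: "'o1 \<Rightarrow> 'o1 \<Rightarrow> 'a2 \<Rightarrow> 'a1"
  assumes F_functor: "is_functor C D Fo Fa"
    and retraction_in_hom:
      "A \<in> cobj C \<Longrightarrow> A' \<in> cobj C \<Longrightarrow> u \<in> hom D (Fo A) (Fo A') \<Longrightarrow> T A A' u \<in> hom C A A'"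
    and retraction_image: "f \<in> hom C A A' \<Longrightarrow> T A A' (Fa f) = f"
    and retraction_natural: "f \<in> hom C X Y \<Longrightarrow> g \<in> hom D (Fo Y) (Fo Z) \<Longrightarrow> h \<in> hom C Z W \<Longrightarrow>
      T X W (ccomp D (Fa h) (ccomp D g (Fa f))) = ccomp C h (ccomp C (T Y Z g) f)"
begin

lemma retraction_comp_right:
  assumes "f \<in> hom C X Y" and "A' \<in> cobj C" and "u \<in> hom D (Fo Y) (Fo A')"
  shows "T X A' (ccomp D u (Fa f)) = ccomp C (T Y A' u) f"
proof -
  have C: "category C" and D: "category D" using functor_categories[OF F_functor] by blast+
  note simps = category_simps[OF C] category_simps[OF D] functor_simps[OF F_functor]
  have "T X A' (ccomp D u (Fa f)) = T X A' (ccomp D (Fa (cid C A')) (ccomp D u (Fa f)))"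
    using assms unfolding hom_def by (simp add: simps)
  also have "\<dots> = ccomp C (T Y A' u) f"
    using assms retraction_in_hom[OF hom_objects(2)[OF C assms(1)] assms(2,3)]
    by (subst retraction_natural) (auto simp: simps hom_def)
  finally show ?thesis .
qed

lemma retraction_comp_left:
  assumes "A \<in> cobj C" and "u \<in> hom D (Fo A) (Fo Y)" and "h \<in> hom C Y Z"
  shows "T A Z (ccomp D (Fa h) u) = ccomp C h (T A Y u)"
proof -
  have C: "category C" and D: "category D" using functor_categories[OF F_functor] by blast+
  note simps = category_simps[OF C] category_simps[OF D] functor_simps[OF F_functor]
  have "T A Z (ccomp D (Fa h) u) = T A Z (ccomp D (Fa h) (ccomp D u (Fa (cid C A))))"
    using assms unfolding hom_def by (simp add: simps)
  also have "\<dots> = ccomp C h (T A Y u)"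
    using assms retraction_in_hom[OF assms(1) hom_objects(1)[OF C assms(3)] assms(2)]
    by (subst retraction_natural) (auto simp: simps hom_def)
  finally show ?thesis .
qed

end

lemma separableE:
  assumes F: "is_functor C D Fo Fa" and "separable C D Fo Fa"
  obtains T where "natural_hom_retraction C D Fo Fa T"
proof -
  obtain T where T_hom: "\<forall>A \<in> cobj C. \<forall>A' \<in> cobj C. \<forall>u \<in> hom D (Fo A) (Fo A'). T A A' u \<in> hom C A A'"
    and T_image: "\<forall>A \<in> cobj C. \<forall>A' \<in> cobj C. \<forall>f \<in> hom C A A'. T A A' (Fa f) = f"
    and T_natural: "\<forall>X \<in> cobj C. \<forall>Y \<in> cobj C. \<forall>Z \<in> cobj C. \<forall>W \<in> cobj C.
       \<forall>f \<in> hom C X Y. \<forall>g \<in> hom D (Fo Y) (Fo Z). \<forall>h \<in> hom C Z W.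
          T X W (ccomp D (Fa h) (ccomp D g (Fa f))) = ccomp C h (ccomp C (T Y Z g) f)"
    using assms(2) unfolding separable_def by (elim exE conjE)
  have C: "category C" using functor_categories[OF F] by blast
  show thesis
  proof (rule that, unfold_locales)
    show "T A A' (Fa f) = f" if "f \<in> hom C A A'" for A A' f
      using T_image that hom_objects[OF C that] by blast
    show "T X W (ccomp D (Fa h) (ccomp D g (Fa f))) = ccomp C h (ccomp C (T Y Z g) f)"
      if "f \<in> hom C X Y" "g \<in> hom D (Fo Y) (Fo Z)" "h \<in> hom C Z W" for X Y Z W f g h
      using T_natural that hom_objects[OF C that(1)] hom_objects[OF C that(3)] by blast
  qed (use F T_hom in blast)+
qed

locale natural_hom_section =
  fixes C :: "('o1, 'a1, 'm1) cat_scheme" and D :: "('o2, 'a2, 'm2) cat_scheme"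
    and Fo :: "'o1 \<Rightarrow> 'o2" and Fa :: "'a1 \<Rightarrow> 'a2" and P :: "'o1 \<Rightarrow> 'o1 \<Rightarrow> 'a2 \<Rightarrow> 'a1"
  assumes section_in_hom:
      "A \<in> cobj C \<Longrightarrow> A' \<in> cobj C \<Longrightarrow> u \<in> hom D (Fo A) (Fo A') \<Longrightarrow> P A A' u \<in> hom C A A'"
    and section_image:
      "A \<in> cobj C \<Longrightarrow> A' \<in> cobj C \<Longrightarrow> u \<in> hom D (Fo A) (Fo A') \<Longrightarrow> Fa (P A A' u) = u"
    and section_natural: "f \<in> hom C X Y \<Longrightarrow> g \<in> hom D (Fo Y) (Fo Z) \<Longrightarrow> h \<in> hom C Z W \<Longrightarrow>
      P X W (ccomp D (Fa h) (ccomp D g (Fa f))) = ccomp C h (ccomp C (P Y Z g) f)"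

lemma naturally_full_iff_natural_hom_section:
  assumes "category C"
  shows "naturally_full C D Fo Fa \<longleftrightarrow> (\<exists>P. natural_hom_section C D Fo Fa P)"
proof
  assume "naturally_full C D Fo Fa"
  then obtain P where P_section:
    "\<forall>A \<in> cobj C. \<forall>A' \<in> cobj C. \<forall>u \<in> hom D (Fo A) (Fo A'). P A A' u \<in> hom C A A' \<and> Fa (P A A' u) = u"
    and P_natural: "\<forall>X \<in> cobj C. \<forall>Y \<in> cobj C. \<forall>Z \<in> cobj C. \<forall>W \<in> cobj C.
       \<forall>f \<in> hom C X Y. \<forall>g \<in> hom D (Fo Y) (Fo Z). \<forall>h \<in> hom C Z W.
         P X W (ccomp D (Fa h) (ccomp D g (Fa f))) = ccomp C h (ccomp C (P Y Z g) f)"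
    unfolding naturally_full_def by (elim exE conjE)
  have "natural_hom_section C D Fo Fa P"
  proof
    show "P X W (ccomp D (Fa h) (ccomp D g (Fa f))) = ccomp C h (ccomp C (P Y Z g) f)"
      if "f \<in> hom C X Y" "g \<in> hom D (Fo Y) (Fo Z)" "h \<in> hom C Z W" for X Y Z W f g h
      using P_natural that hom_objects[OF assms that(1)] hom_objects[OF assms that(3)] by blast
  qed (use P_section in blast)+
  then show "\<exists>P. natural_hom_section C D Fo Fa P" by blast
next
  assume "\<exists>P. natural_hom_section C D Fo Fa P"
  then obtain P where "natural_hom_section C D Fo Fa P" ..
  then interpret natural_hom_section C D Fo Fa P .
  show "naturally_full C D Fo Fa"
    unfolding naturally_full_def
    by (intro exI[of _ P] conjI ballI section_in_hom section_image section_natural)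
qed

locale unit_counit_adjunction =
  fixes X :: "('o1, 'a1, 'm1) cat_scheme" and Y :: "('o2, 'a2, 'm2) cat_scheme"
    and Lo :: "'o1 \<Rightarrow> 'o2" and La :: "'a1 \<Rightarrow> 'a2" and Ro :: "'o2 \<Rightarrow> 'o1" and Ra :: "'a2 \<Rightarrow> 'a1"
    and \<eta> :: "'o1 \<Rightarrow> 'a1" and \<epsilon> :: "'o2 \<Rightarrow> 'a2"
  assumes left_functor: "is_functor X Y Lo La" and right_functor: "is_functor Y X Ro Ra"
    and unit_in_hom: "A \<in> cobj X \<Longrightarrow> \<eta> A \<in> hom X A (Ro (Lo A))"
    and unit_natural: "f \<in> hom X A B \<Longrightarrow> ccomp X (Ra (La f)) (\<eta> A) = ccomp X (\<eta> B) f"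
    and counit_in_hom: "U \<in> cobj Y \<Longrightarrow> \<epsilon> U \<in> hom Y (Lo (Ro U)) U"
    and counit_natural: "g \<in> hom Y U V \<Longrightarrow> ccomp Y (\<epsilon> V) (La (Ra g)) = ccomp Y g (\<epsilon> U)"
    and triangle_left: "A \<in> cobj X \<Longrightarrow> ccomp Y (\<epsilon> (Lo A)) (La (\<eta> A)) = cid Y (Lo A)"
    and triangle_right: "U \<in> cobj Y \<Longrightarrow> ccomp X (Ra (\<epsilon> U)) (\<eta> (Ro U)) = cid X (Ro U)"

lemma adjunctionE:
  assumes "adjunction X Y Lo La Ro Ra"
  obtains \<eta> \<epsilon> where "unit_counit_adjunction X Y Lo La Ro Ra \<eta> \<epsilon>"
proof -
  have L: "is_functor X Y Lo La" and R: "is_functor Y X Ro Ra"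
    using assms unfolding adjunction_def by blast+
  have cX: "category X" and cY: "category Y" using functor_categories[OF L] by blast+
  obtain \<eta> \<epsilon> where \<eta>: "\<forall>A \<in> cobj X. \<eta> A \<in> hom X A (Ro (Lo A))"
    and \<eta>_natural: "\<forall>A \<in> cobj X. \<forall>B \<in> cobj X. \<forall>f \<in> hom X A B.
      ccomp X (Ra (La f)) (\<eta> A) = ccomp X (\<eta> B) f"
    and \<epsilon>: "\<forall>U \<in> cobj Y. \<epsilon> U \<in> hom Y (Lo (Ro U)) U"
    and \<epsilon>_natural: "\<forall>U \<in> cobj Y. \<forall>V \<in> cobj Y. \<forall>g \<in> hom Y U V.
      ccomp Y (\<epsilon> V) (La (Ra g)) = ccomp Y g (\<epsilon> U)"
    and triangles: "\<forall>A \<in> cobj X. ccomp Y (\<epsilon> (Lo A)) (La (\<eta> A)) = cid Y (Lo A)"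
      "\<forall>U \<in> cobj Y. ccomp X (Ra (\<epsilon> U)) (\<eta> (Ro U)) = cid X (Ro U)"
    using assms unfolding adjunction_def by (elim exE conjE)
  show thesis
  proof (rule that, unfold_locales)
    show "ccomp X (Ra (La f)) (\<eta> A) = ccomp X (\<eta> B) f" if "f \<in> hom X A B" for A B f
      using \<eta>_natural that hom_objects[OF cX that] by blast
    show "ccomp Y (\<epsilon> V) (La (Ra g)) = ccomp Y g (\<epsilon> U)" if "g \<in> hom Y U V" for U V g
      using \<epsilon>_natural that hom_objects[OF cY that] by blast
  qed (use L R \<eta> \<epsilon> triangles in blast)+
qed

definition identity_natural_retract ::
  "('o, 'a, 'm) cat_scheme \<Rightarrow> ('o \<Rightarrow> 'o) \<Rightarrow> ('a \<Rightarrow> 'a) \<Rightarrow> ('o \<Rightarrow> 'a) \<Rightarrow> ('o \<Rightarrow> 'a) \<Rightarrow> bool" where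
  "identity_natural_retract C Mo Ma i r \<longleftrightarrow>
     (\<forall>A \<in> cobj C. i A \<in> hom C A (Mo A) \<and> r A \<in> hom C (Mo A) A \<and> ccomp C (r A) (i A) = cid C A)
   \<and> (\<forall>A \<in> cobj C. \<forall>B \<in> cobj C. \<forall>f \<in> hom C A B.
        ccomp C (i B) f = ccomp C (Ma f) (i A) \<and> ccomp C f (r A) = ccomp C (r B) (Ma f))"

lemma identity_natural_retractD:
  assumes "category C" and "identity_natural_retract C Mo Ma i r"
  shows "A \<in> cobj C \<Longrightarrow> i A \<in> carr C" and "A \<in> cobj C \<Longrightarrow> cdom C (i A) = A"
    and "A \<in> cobj C \<Longrightarrow> ccod C (i A) = Mo A"
    and "A \<in> cobj C \<Longrightarrow> r A \<in> carr C" and "A \<in> cobj C \<Longrightarrow> cdom C (r A) = Mo A"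
    and "A \<in> cobj C \<Longrightarrow> ccod C (r A) = A"
    and "A \<in> cobj C \<Longrightarrow> ccomp C (r A) (i A) = cid C A"
    and "f \<in> carr C \<Longrightarrow> ccomp C (i (ccod C f)) f = ccomp C (Ma f) (i (cdom C f))"
    and "f \<in> carr C \<Longrightarrow> ccomp C f (r (cdom C f)) = ccomp C (r (ccod C f)) (Ma f)"
  using assms category_simps(4,5)[OF assms(1)]
  unfolding identity_natural_retract_def hom_def by auto

context unit_counit_adjunction
begin

lemma separable_left_adjoint_retracts_unit:
  assumes "natural_hom_retraction X Y Lo La T"
  shows "identity_natural_retract X (Ro \<circ> Lo) (Ra \<circ> La) \<eta> (\<lambda>A. T (Ro (Lo A)) A (\<epsilon> (Lo A)))"
    (is "identity_natural_retract X _ _ \<eta> ?r")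
proof -
  interpret T: natural_hom_retraction X Y Lo La T by fact
  have cX: "category X" and cY: "category Y" using functor_categories[OF left_functor] by blast+
  note simps = category_simps[OF cX] category_simps[OF cY] functor_simps[OF left_functor]
    functor_simps[OF right_functor]
  have r_hom: "?r A \<in> hom X (Ro (Lo A)) A" if "A \<in> cobj X" for A
    using that by (intro T.retraction_in_hom counit_in_hom) (simp_all add: simps)
  have "ccomp X (?r A) (\<eta> A) = cid X A" if A: "A \<in> cobj X" for A
  proof -
    have "ccomp X (?r A) (\<eta> A) = T A A (ccomp Y (\<epsilon> (Lo A)) (La (\<eta> A)))"
      using A by (intro T.retraction_comp_right[symmetric] unit_in_hom counit_in_hom) (simp_all add: simps)
    also have "\<dots> = T A A (La (cid X A))"
      using A by (simp add: triangle_left simps)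
    also have "\<dots> = cid X A"
      using A by (intro T.retraction_image) (simp add: simps hom_def)
    finally show ?thesis .
  qed
  moreover have "ccomp X f (?r A) = ccomp X (?r B) (Ra (La f))" if f: "f \<in> hom X A B" for A B f
  proof -
    have A: "A \<in> cobj X" and B: "B \<in> cobj X" using hom_objects[OF cX f] by blast+
    have Lf: "La f \<in> hom Y (Lo A) (Lo B)" using f by (simp add: simps hom_def)
    have "ccomp X f (?r A) = T (Ro (Lo A)) B (ccomp Y (La f) (\<epsilon> (Lo A)))"
      using A f by (intro T.retraction_comp_left[symmetric] counit_in_hom) (simp_all add: simps)
    also have "\<dots> = T (Ro (Lo A)) B (ccomp Y (\<epsilon> (Lo B)) (La (Ra (La f))))"
      using counit_natural[OF Lf] by simp
    also have "\<dots> = ccomp X (?r B) (Ra (La f))"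
      using A B Lf by (intro T.retraction_comp_right counit_in_hom) (simp_all add: simps hom_def)
    finally show ?thesis .
  qed
  ultimately show ?thesis
    unfolding identity_natural_retract_def using unit_in_hom unit_natural r_hom by auto
qed

lemma separable_right_adjoint_splits_counit:
  assumes "natural_hom_retraction Y X Ro Ra T"
  shows "identity_natural_retract Y (Lo \<circ> Ro) (La \<circ> Ra) (\<lambda>U. T U (Lo (Ro U)) (\<eta> (Ro U))) \<epsilon>"
    (is "identity_natural_retract Y _ _ ?i \<epsilon>")
proof -
  interpret T: natural_hom_retraction Y X Ro Ra T by fact
  have cX: "category X" and cY: "category Y" using functor_categories[OF left_functor] by blast+
  note simps = category_simps[OF cX] category_simps[OF cY] functor_simps[OF left_functor]
    functor_simps[OF right_functor]
  have i_hom: "?i U \<in> hom Y U (Lo (Ro U))" if "U \<in> cobj Y" for U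
    using that by (intro T.retraction_in_hom unit_in_hom) (simp_all add: simps)
  have "ccomp Y (\<epsilon> U) (?i U) = cid Y U" if U: "U \<in> cobj Y" for U
  proof -
    have "ccomp Y (\<epsilon> U) (?i U) = T U U (ccomp X (Ra (\<epsilon> U)) (\<eta> (Ro U)))"
      using U by (intro T.retraction_comp_left[symmetric] unit_in_hom counit_in_hom) (simp_all add: simps)
    also have "\<dots> = T U U (Ra (cid Y U))"
      using U by (simp add: triangle_right simps)
    also have "\<dots> = cid Y U"
      using U by (intro T.retraction_image) (simp add: simps hom_def)
    finally show ?thesis .
  qed
  moreover have "ccomp Y (?i V) g = ccomp Y (La (Ra g)) (?i U)" if g: "g \<in> hom Y U V" for U V g
  proof -
    have U: "U \<in> cobj Y" and V: "V \<in> cobj Y" using hom_objects[OF cY g] by blast+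
    have Rg: "Ra g \<in> hom X (Ro U) (Ro V)" using g by (simp add: simps hom_def)
    have "ccomp Y (?i V) g = T U (Lo (Ro V)) (ccomp X (\<eta> (Ro V)) (Ra g))"
      using V g by (intro T.retraction_comp_right[symmetric] unit_in_hom) (simp_all add: simps)
    also have "\<dots> = T U (Lo (Ro V)) (ccomp X (Ra (La (Ra g))) (\<eta> (Ro U)))"
      using unit_natural[OF Rg] by simp
    also have "\<dots> = ccomp Y (La (Ra g)) (?i U)"
      using U V Rg by (intro T.retraction_comp_left unit_in_hom) (simp_all add: simps hom_def)
    finally show ?thesis .
  qed
  ultimately show ?thesis
    unfolding identity_natural_retract_def using i_hom counit_in_hom counit_natural by auto
qed

end

lemma separable_adjoint_identity_natural_retract:
  assumes F: "is_functor CD CC Fo Fa" and sep: "separable CD CC Fo Fa"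
    and adj: "adjunction CD CC Fo Fa Go Ga \<or> adjunction CC CD Go Ga Fo Fa"
  shows "\<exists>i r. identity_natural_retract CD (Go \<circ> Fo) (Ga \<circ> Fa) i r"
proof -
  obtain T where T: "natural_hom_retraction CD CC Fo Fa T"
    using separableE[OF F sep] .
  from adj show ?thesis
  proof
    assume "adjunction CD CC Fo Fa Go Ga"
    then obtain \<eta> \<epsilon> where "unit_counit_adjunction CD CC Fo Fa Go Ga \<eta> \<epsilon>"
      by (rule adjunctionE)
    then show ?thesis
      using unit_counit_adjunction.separable_left_adjoint_retracts_unit[OF _ T] by blast
  next
    assume "adjunction CC CD Go Ga Fo Fa"
    then obtain \<eta> \<epsilon> where "unit_counit_adjunction CC CD Go Ga Fo Fa \<eta> \<epsilon>"
      by (rule adjunctionE)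
    then show ?thesis
      using unit_counit_adjunction.separable_right_adjoint_splits_counit[OF _ T] by blast
  qed
qed

locale retract_transfer =
  fixes CD :: "('od, 'ad, 'md) cat_scheme" and CC :: "('oc, 'ac, 'mc) cat_scheme"
    and CE :: "('oe, 'ae, 'me) cat_scheme"
    and Ko :: "'od \<Rightarrow> 'oc" and Ka :: "'ad \<Rightarrow> 'ac" and Go :: "'oc \<Rightarrow> 'od" and Ga :: "'ac \<Rightarrow> 'ad"
    and Ho :: "'od \<Rightarrow> 'oe" and Ha :: "'ad \<Rightarrow> 'ae"
    and i r :: "'od \<Rightarrow> 'ad" and P :: "'oc \<Rightarrow> 'oc \<Rightarrow> 'ae \<Rightarrow> 'ac"
  assumes K_functor: "is_functor CD CC Ko Ka" and G_functor: "is_functor CC CD Go Ga"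
    and H_functor: "is_functor CD CE Ho Ha"
    and retract: "identity_natural_retract CD (Go \<circ> Ko) (Ga \<circ> Ka) i r"
    and HG_section: "natural_hom_section CC CE (Ho \<circ> Go) (Ha \<circ> Ga) P"
begin

lemma categories: "category CD" "category CC" "category CE"
  using functor_categories K_functor H_functor by blast+

lemmas retract_naturality = identity_natural_retractD(8,9)[OF categories(1) retract, unfolded comp_apply]

lemmas simps = category_simps[OF categories(1)] category_simps[OF categories(2)]
  category_simps[OF categories(3)] functor_simps[OF K_functor] functor_simps[OF G_functor]
  functor_simps[OF H_functor] identity_natural_retractD(1-7)[OF categories(1) retract, unfolded comp_apply]

lemmas P_in_hom = natural_hom_section.section_in_hom[OF HG_section, unfolded comp_apply]
  and P_image = natural_hom_section.section_image[OF HG_section, unfolded comp_apply]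
  and P_natural = natural_hom_section.section_natural[OF HG_section, unfolded comp_apply]

definition lift :: "'od \<Rightarrow> 'od \<Rightarrow> 'ae \<Rightarrow> 'ae" where
  "lift A A' u = ccomp CE (Ha (i A')) (ccomp CE u (Ha (r A)))"

definition transferred_section :: "'od \<Rightarrow> 'od \<Rightarrow> 'ae \<Rightarrow> 'ad" where
  "transferred_section A A' u = ccomp CD (r A') (ccomp CD (Ga (P (Ko A) (Ko A') (lift A A' u))) (i A))"

lemma lift_in_hom:
  assumes "A \<in> cobj CD" "A' \<in> cobj CD" "u \<in> hom CE (Ho A) (Ho A')"
  shows "lift A A' u \<in> hom CE (Ho (Go (Ko A))) (Ho (Go (Ko A')))"
  using assms unfolding lift_def hom_def by (simp add: simps)

lemma P_lift:
  assumes "A \<in> cobj CD" "A' \<in> cobj CD" "u \<in> hom CE (Ho A) (Ho A')"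
  shows "P (Ko A) (Ko A') (lift A A' u) \<in> hom CC (Ko A) (Ko A')"
    and "Ha (Ga (P (Ko A) (Ko A') (lift A A' u))) = lift A A' u"
  using assms by (intro P_in_hom P_image lift_in_hom; simp add: simps)+

lemma H_retract: "A \<in> cobj CD \<Longrightarrow> ccomp CE (Ha (r A)) (Ha (i A)) = cid CE (Ho A)"
  using functor_simps(5)[OF H_functor, of "i A" "r A", symmetric] by (simp add: simps)

lemma H_retract_cancel:
  assumes "A \<in> cobj CD" "x \<in> carr CE" "ccod CE x = Ho A"
  shows "ccomp CE (Ha (r A)) (ccomp CE (Ha (i A)) x) = x"
  using assms category_simps(9)[OF categories(3), of x "Ha (i A)" "Ha (r A)"] by (simp add: simps H_retract)

lemma lift_cancel:
  assumes "A \<in> cobj CD" "A' \<in> cobj CD" "u \<in> hom CE (Ho A) (Ho A')"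
  shows "ccomp CE (Ha (r A')) (ccomp CE (lift A A' u) (Ha (i A))) = u"
  using assms unfolding lift_def hom_def by (simp add: simps H_retract H_retract_cancel)

lemma lift_natural:
  assumes f: "f \<in> hom CD X Y" and g: "g \<in> hom CE (Ho Y) (Ho Z)" and h: "h \<in> hom CD Z W"
  shows "lift X W (ccomp CE (Ha h) (ccomp CE g (Ha f)))
    = ccomp CE (Ha (Ga (Ka h))) (ccomp CE (lift Y Z g) (Ha (Ga (Ka f))))"
proof -
  note objects = hom_objects[OF categories(1) f] hom_objects[OF categories(1) h]
  have "lift X W (ccomp CE (Ha h) (ccomp CE g (Ha f)))
      = ccomp CE (Ha (ccomp CD (i W) h)) (ccomp CE g (Ha (ccomp CD f (r X))))"
    using assms objects unfolding lift_def hom_def by (simp add: simps)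
  also have "\<dots> = ccomp CE (Ha (ccomp CD (Ga (Ka h)) (i Z))) (ccomp CE g (Ha (ccomp CD (r Y) (Ga (Ka f)))))"
    using f h retract_naturality unfolding hom_def by auto
  also have "\<dots> = ccomp CE (Ha (Ga (Ka h))) (ccomp CE (lift Y Z g) (Ha (Ga (Ka f))))"
    using assms objects unfolding lift_def hom_def by (simp add: simps)
  finally show ?thesis .
qed

lemma transferred_section_in_hom:
  assumes "A \<in> cobj CD" "A' \<in> cobj CD" "u \<in> hom CE (Ho A) (Ho A')"
  shows "transferred_section A A' u \<in> hom CD A A'"
  using assms P_lift[OF assms] unfolding transferred_section_def hom_def by (simp add: simps)

lemma transferred_section_image:
  assumes "A \<in> cobj CD" "A' \<in> cobj CD" "u \<in> hom CE (Ho A) (Ho A')"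
  shows "Ha (transferred_section A A' u) = u"
  using assms P_lift[OF assms] lift_cancel[OF assms]
  unfolding transferred_section_def hom_def by (simp add: simps)

lemma transferred_section_natural:
  assumes f: "f \<in> hom CD X Y" and g: "g \<in> hom CE (Ho Y) (Ho Z)" and h: "h \<in> hom CD Z W"
  shows "transferred_section X W (ccomp CE (Ha h) (ccomp CE g (Ha f)))
    = ccomp CD h (ccomp CD (transferred_section Y Z g) f)"
proof -
  note objects = hom_objects[OF categories(1) f] hom_objects[OF categories(1) h]
  let ?Pg = "P (Ko Y) (Ko Z) (lift Y Z g)"
  have "P (Ko X) (Ko W) (lift X W (ccomp CE (Ha h) (ccomp CE g (Ha f))))
      = ccomp CC (Ka h) (ccomp CC ?Pg (Ka f))"
    unfolding lift_natural[OF assms] using assms objects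
    by (intro P_natural lift_in_hom) (simp_all add: simps hom_def)
  then have "transferred_section X W (ccomp CE (Ha h) (ccomp CE g (Ha f)))
      = ccomp CD (ccomp CD (r W) (Ga (Ka h))) (ccomp CD (Ga ?Pg) (ccomp CD (Ga (Ka f)) (i X)))"
    using f h objects P_lift(1)[OF _ _ g] unfolding transferred_section_def hom_def by (simp add: simps)
  also have "\<dots> = ccomp CD (ccomp CD h (r Z)) (ccomp CD (Ga ?Pg) (ccomp CD (i Y) f))"
    using f h retract_naturality unfolding hom_def by auto
  also have "\<dots> = ccomp CD h (ccomp CD (transferred_section Y Z g) f)"
    using f h objects P_lift(1)[OF _ _ g] unfolding transferred_section_def hom_def by (simp add: simps)
  finally show ?thesis .
qed

lemma natural_hom_section: "natural_hom_section CD CE Ho Ha transferred_section"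
  by unfold_locales
    (fact transferred_section_in_hom transferred_section_image transferred_section_natural)+

end

lemma naturally_full_if_identity_natural_retract:
  assumes K: "is_functor CD CC Ko Ka" and G: "is_functor CC CD Go Ga" and H: "is_functor CD CE Ho Ha"
    and HG: "naturally_full CC CE (Ho \<circ> Go) (Ha \<circ> Ga)"
    and retract: "identity_natural_retract CD (Go \<circ> Ko) (Ga \<circ> Ka) i r"
  shows "naturally_full CD CE Ho Ha"
proof -
  have "category CD" "category CC" using functor_categories[OF K] by blast+
  obtain P where "natural_hom_section CC CE (Ho \<circ> Go) (Ha \<circ> Ga) P"
    using HG naturally_full_iff_natural_hom_section[OF \<open>category CC\<close>] by blast
  then interpret retract_transfer CD CC CE Ko Ka Go Ga Ho Ha i r P
    by (rule retract_transfer.intro[OF K G H retract])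
  show ?thesis
    using natural_hom_section naturally_full_iff_natural_hom_section[OF \<open>category CD\<close>] by blast
qed

theorem proposition2p4:
  fixes CD :: "('od, 'ad) cat" and CC :: "('oc, 'ac) cat" and CE :: "('oe, 'ae) cat"
    and Fo :: "'od \<Rightarrow> 'oc" and Fa :: "'ad \<Rightarrow> 'ac"
    and Go :: "'oc \<Rightarrow> 'od" and Ga :: "'ac \<Rightarrow> 'ad"
    and Ho :: "'od \<Rightarrow> 'oe" and Ha :: "'ad \<Rightarrow> 'ae"
  assumes F: "is_functor CD CC Fo Fa"
    and G: "is_functor CC CD Go Ga"
    and H: "is_functor CD CE Ho Ha"
    and adj: "adjunction CD CC Fo Fa Go Ga \<or> adjunction CC CD Go Ga Fo Fa"
    and HG: "naturally_full CC CE (Ho \<circ> Go) (Ha \<circ> Ga)"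
    and Fsep: "separable CD CC Fo Fa"
  shows "naturally_full CD CE Ho Ha"
proof -
  obtain i r where "identity_natural_retract CD (Go \<circ> Fo) (Ga \<circ> Fa) i r"
    using separable_adjoint_identity_natural_retract[OF F Fsep adj] by blast
  then show ?thesis
    by (rule naturally_full_if_identity_natural_retract[OF F G H HG])
qed

end
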